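(* Let $f:\mathbb{R}^d\to\mathbb{R}$ be differentiable with $L$-Lipschitz gradient and $c$-strongly convex, with minimizer $\vec x^*$. Consider single-step SGD iterations (as defined in the context) with constant learning rate $\alpha\le\frac{1}{3L}$ satisfying elastic consistency with constant $B$. Then for every $t\ge0$, $$\mathbb{E}\|\vec x_{t+1}-\vec x^*\|^2\le\Big(1-\frac{\alpha c}{2}\Big)\mathbb{E}\|\vec x_t-\vec x^*\|^2+\frac{2\alpha^3B^2L^2}{c}+3\alpha^2\sigma^2+3\alpha^4L^2B^2.$$
   Context: $c$-strong convexity ($c>0$) means $(\vec x-\vec y)^\top(\nabla f(\vec x)-\nabla f(\vec y))\ge c\|\vec x-\vec y\|^2$ for all $\vec x,\vec y$. All random objects live on a probability space with a filtration $(\mathcal F_t)_{t\ge0}$. Single-step SGD iterations: $\vec x_0\in\mathbb{R}^d$ is deterministic. At each iteration $t\ge0$ some processor $i=i_t$ (chosen independently of the algorithm's randomness) holds a view $\vec v_t^{i}$. The vectors $\vec x_t,\vec v_t^{i}$ are $\mathcal F_t$-measurable, and the processor computes an $\mathcal F_{t+1}$-measurable stochastic gradient $\tilde G(\vec v_t^{i})$ with $\mathbb{E}[\tilde G(\vec v_t^{i})\mid\mathcal F_t]=\nabla f(\vec v_t^{i})$ and $\mathbb{E}[\|\tilde G(\vec v_t^{i})-\nabla f(\vec v_t^{i})\|^2\mid\mathcal F_t]\le\sigma^2$. Update: $\vec x_{t+1}=\vec x_t-\alpha\tilde G(\vec v_t^{i})$. Elastic consistency with constant $B>0$: $\mathbb{E}\|\vec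 x_t-\vec v_t^{i}\|^2\le\alpha^2B^2$ for every $t$ and the processor $i$ acting at $t$. *)

theory Defs
  imports "HOL-Probability.Probability"
begin

end

theory Submission
  imports Defs
begin

text \<open>Write \<open>X = x t\<close>, \<open>V = v t\<close> and split the update as
  \<open>x (Suc t) - xstar = U - \<alpha> N\<close> with \<open>U = X - xstar - \<alpha> f' V\<close> and \<open>N = G t - f' V\<close>.
  \<open>U\<close> is \<open>F t\<close>-measurable while \<open>N\<close> has conditional mean zero, so the cross term vanishes
  in expectation and \<open>E\<parallel>x (Suc t) - xstar\<parallel>\<^sup>2 = E\<parallel>U\<parallel>\<^sup>2 + \<alpha>\<^sup>2 E\<parallel>N\<parallel>\<^sup>2\<close>, the last term
  being at most \<open>\<alpha>\<^sup>2 \<sigma>\<^sup>2\<close>. The term \<open>U\<close> is a deterministic gradient step taken at the stale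
  point \<open>V\<close>: strong monotonicity, co-coercivity \<open>\<parallel>f' A\<parallel>\<^sup>2 \<le> 2 L \<langle>A - xstar, f' A\<rangle>\<close> of a
  convex function with \<open>L\<close>-Lipschitz gradient and \<open>\<alpha> L \<le> 1/3\<close> give
  \<open>\<parallel>U\<parallel>\<^sup>2 \<le> (1 - \<alpha> c / 2) \<parallel>X - xstar\<parallel>\<^sup>2 + (2 \<alpha> L\<^sup>2 / c + 3 \<alpha>\<^sup>2 L\<^sup>2) \<parallel>X - V\<parallel>\<^sup>2\<close>,
  and elastic consistency bounds \<open>E\<parallel>X - V\<parallel>\<^sup>2\<close> by \<open>\<alpha>\<^sup>2 B\<^sup>2\<close>.\<close>

lemma has_derivative_mean_value_segment:
  fixes f :: "'a::real_inner \<Rightarrow> real"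
  assumes grad: "\<And>y. (f has_derivative (\<lambda>h. f' y \<bullet> h)) (at y)"
  obtains s where "s \<in> {0..1}" "f z - f x = f' (x + s *\<^sub>R (z - x)) \<bullet> (z - x)"
proof -
  define \<gamma> where "\<gamma> s = x + s *\<^sub>R (z - x)" for s :: real
  have "((f \<circ> \<gamma>) has_derivative (\<lambda>ds. ds * (f' (\<gamma> s) \<bullet> (z - x)))) (at s within {0..1})" for s
  proof -
    have "(\<gamma> has_derivative (\<lambda>ds. ds *\<^sub>R (z - x))) (at s within {0..1})"
      unfolding \<gamma>_def by (auto intro!: derivative_eq_intros)
    from diff_chain_within[OF this has_derivative_subset[OF grad]]
    show ?thesis by (simp add: o_def algebra_simps)
  qed
  from mvt_very_simple[of 0 1 "f \<circ> \<gamma>", OF _ this] obtain s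
    where "s \<in> {0..1}" "f (\<gamma> 1) - f (\<gamma> 0) = f' (\<gamma> s) \<bullet> (z - x)"
    by auto
  with that show ?thesis by (simp add: \<gamma>_def)
qed

lemma monotone_gradient_first_order:
  fixes f :: "'a::real_inner \<Rightarrow> real"
  assumes grad: "\<And>y. (f has_derivative (\<lambda>h. f' y \<bullet> h)) (at y)"
    and mono: "\<And>y z. 0 \<le> (y - z) \<bullet> (f' y - f' z)"
  shows "f x + f' x \<bullet> (z - x) \<le> f z"
proof -
  obtain s where s: "s \<in> {0..1}" "f z - f x = f' (x + s *\<^sub>R (z - x)) \<bullet> (z - x)"
    using has_derivative_mean_value_segment[OF grad] .
  have "0 \<le> s * ((z - x) \<bullet> (f' (x + s *\<^sub>R (z - x)) - f' x))"
    using mono[of "x + s *\<^sub>R (z - x)" x] by simp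
  then have "s = 0 \<or> 0 \<le> (z - x) \<bullet> (f' (x + s *\<^sub>R (z - x)) - f' x)"
    using s(1) by (auto simp: zero_le_mult_iff)
  then show ?thesis
    using s(2) by (auto simp: inner_diff_right inner_commute)
qed

lemma lipschitz_gradient_quadratic_upper_bound:
  fixes f :: "'a::real_inner \<Rightarrow> real"
  assumes grad: "\<And>y. (f has_derivative (\<lambda>h. f' y \<bullet> h)) (at y)"
    and lip: "L-lipschitz_on UNIV f'"
  shows "f z \<le> f x + f' x \<bullet> (z - x) + L * (norm (z - x))\<^sup>2"
proof -
  obtain s where s: "s \<in> {0..1}" "f z - f x = f' (x + s *\<^sub>R (z - x)) \<bullet> (z - x)"
    using has_derivative_mean_value_segment[OF grad] .
  have "0 \<le> L" using lip lipschitz_on_nonneg by blast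
  have "(f' (x + s *\<^sub>R (z - x)) - f' x) \<bullet> (z - x)
      \<le> norm (f' (x + s *\<^sub>R (z - x)) - f' x) * norm (z - x)"
    by (rule norm_cauchy_schwarz)
  also have "\<dots> \<le> (L * (s * norm (z - x))) * norm (z - x)"
    using lipschitz_onD[OF lip, of "x + s *\<^sub>R (z - x)" x] s(1)
    by (intro mult_right_mono) (auto simp: dist_norm)
  also have "\<dots> \<le> L * (norm (z - x))\<^sup>2"
    using s(1) \<open>0 \<le> L\<close> mult_right_mono[of s 1 "L * (norm (z - x))\<^sup>2"]
    by (simp add: power2_eq_square mult_ac)
  finally show ?thesis using s(2) by (simp add: inner_diff_left)
qed

text \<open>Compare the quadratic upper bound around \<open>y\<close> with the first-order lower bound around
  \<open>x\<close> at the point \<open>y - (f' y - f' x) /\<^sub>R (2 L)\<close>.\<close>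
lemma convex_lipschitz_gradient_bregman_lower_bound:
  fixes f :: "'a::real_inner \<Rightarrow> real"
  assumes grad: "\<And>y. (f has_derivative (\<lambda>h. f' y \<bullet> h)) (at y)"
    and lip: "L-lipschitz_on UNIV f'" and "0 < L"
    and mono: "\<And>y z. 0 \<le> (y - z) \<bullet> (f' y - f' z)"
  shows "(norm (f' y - f' x))\<^sup>2 / (4 * L) \<le> f y - f x - f' x \<bullet> (y - x)"
proof -
  define g where "g = f' y - f' x"
  define w where "w = y - (1 / (2 * L)) *\<^sub>R g"
  have "f x + f' x \<bullet> (w - x) \<le> f w"
    by (rule monotone_gradient_first_order[OF grad mono])
  moreover have "f w \<le> f y + f' y \<bullet> (w - y) + L * (norm (w - y))\<^sup>2"
    by (rule lipschitz_gradient_quadratic_upper_bound[OF grad lip])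
  moreover have "L * (norm (w - y))\<^sup>2 = (norm g)\<^sup>2 / (4 * L)"
    using \<open>0 < L\<close> by (simp add: w_def power2_eq_square field_simps)
  moreover have "f' y \<bullet> (w - y) - f' x \<bullet> (w - x) = - f' x \<bullet> (y - x) - 2 * ((norm g)\<^sup>2 / (4 * L))"
    by (simp add: w_def g_def inner_diff_right inner_diff_left power2_norm_eq_inner
        add_divide_distrib diff_divide_distrib inner_commute algebra_simps)
  ultimately show ?thesis
    by (simp add: g_def)
qed

lemma convex_lipschitz_gradient_cocoercive:
  fixes f :: "'a::real_inner \<Rightarrow> real"
  assumes grad: "\<And>y. (f has_derivative (\<lambda>h. f' y \<bullet> h)) (at y)"
    and lip: "L-lipschitz_on UNIV f'" and "0 < L"
    and mono: "\<And>y z. 0 \<le> (y - z) \<bullet> (f' y - f' z)"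
  shows "(norm (f' y - f' x))\<^sup>2 \<le> 2 * L * ((y - x) \<bullet> (f' y - f' x))"
proof -
  have "(norm (f' y - f' x))\<^sup>2 / (4 * L) \<le> f y - f x - f' x \<bullet> (y - x)"
       "(norm (f' x - f' y))\<^sup>2 / (4 * L) \<le> f x - f y - f' y \<bullet> (x - y)"
    by (rule convex_lipschitz_gradient_bregman_lower_bound[OF grad lip \<open>0 < L\<close> mono])+
  moreover have "(y - x) \<bullet> (f' y - f' x)
      = (f y - f x - f' x \<bullet> (y - x)) + (f x - f y - f' y \<bullet> (x - y))"
    by (simp add: inner_diff_left inner_diff_right inner_commute algebra_simps)
  ultimately have "(norm (f' y - f' x))\<^sup>2 / (2 * L) \<le> (y - x) \<bullet> (f' y - f' x)"
    by (simp add: norm_minus_commute)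
  then show ?thesis
    using \<open>0 < L\<close> by (simp add: field_simps)
qed

lemma gradient_eq_zero_at_minimizer:
  fixes f :: "'a::real_inner \<Rightarrow> real"
  assumes "(f has_derivative (\<lambda>h. f' xstar \<bullet> h)) (at xstar)"
    and "\<And>y. f xstar \<le> f y"
  shows "f' xstar = 0"
proof -
  have "(\<lambda>h. f' xstar \<bullet> h) = (\<lambda>h. 0)"
    using differential_zero_maxmin[of xstar UNIV] assms by auto
  then have "f' xstar \<bullet> f' xstar = 0" by meson
  then show ?thesis by simp
qed

lemma strongly_monotone_le_lipschitz:
  fixes g :: "'a::euclidean_space \<Rightarrow> 'a"
  assumes lip: "L-lipschitz_on UNIV g"
    and strong: "\<And>y z. c * (norm (y - z))\<^sup>2 \<le> (y - z) \<bullet> (g y - g z)"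
  shows "c \<le> L"
proof -
  obtain e :: 'a where "e \<in> Basis" using nonempty_Basis by blast
  then have "norm e = 1" by simp
  have "c * (norm (e - 0))\<^sup>2 \<le> (e - 0) \<bullet> (g e - g 0)" by (rule strong)
  also have "\<dots> \<le> norm (e - 0) * norm (g e - g 0)" by (rule norm_cauchy_schwarz)
  also have "\<dots> \<le> L * norm (e - 0)"
    using lipschitz_onD[OF lip, of e 0] \<open>norm e = 1\<close> by (simp add: dist_norm)
  finally show ?thesis using \<open>norm e = 1\<close> by simp
qed

lemma norm_add_square_le:
  fixes x y :: "'a::real_inner"
  shows "(norm (x + y))\<^sup>2 \<le> 3/2 * (norm x)\<^sup>2 + 3 * (norm y)\<^sup>2"
proof -
  have "0 \<le> 2 * (norm ((1/2) *\<^sub>R x - y))\<^sup>2" by simp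
  then show ?thesis
    by (simp add: power2_norm_eq_inner inner_add_left inner_add_right inner_diff_left
        inner_diff_right inner_commute algebra_simps)
qed

lemma perturbed_step_scalar_inequality:
  fixes a d p L c \<alpha> :: real
  assumes "0 < \<alpha>" "0 < c" "\<alpha> * L \<le> 1/3" "c * a\<^sup>2 \<le> p" "0 \<le> a" "0 \<le> d"
  shows "a\<^sup>2 - 2 * \<alpha> * (p - L * a * d) + \<alpha>\<^sup>2 * (3 * L * p + 3 * L\<^sup>2 * d\<^sup>2)
     \<le> (1 - \<alpha> * c / 2) * a\<^sup>2 + (2 * \<alpha> * L\<^sup>2 / c + 3 * \<alpha>\<^sup>2 * L\<^sup>2) * d\<^sup>2"
proof -
  have "0 \<le> p" using assms by (metis order_trans zero_le_mult_iff zero_le_power2 less_imp_le)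
  then have "\<alpha>\<^sup>2 * (3 * L * p) \<le> \<alpha> * p"
    using assms mult_right_mono[of "3 * (\<alpha> * L)" 1 "\<alpha> * p"]
    by (simp add: power2_eq_square mult_ac)
  moreover have "2 * L * a * d \<le> c / 2 * a\<^sup>2 + 2 * L\<^sup>2 / c * d\<^sup>2"
  proof -
    have "0 \<le> (c * a - 2 * L * d)\<^sup>2 / (2 * c)" using assms by simp
    also have "\<dots> = c / 2 * a\<^sup>2 + 2 * L\<^sup>2 / c * d\<^sup>2 - 2 * L * a * d"
      using assms by (simp add: power2_eq_square field_simps)
    finally show ?thesis by simp
  qed
  then have "\<alpha> * (2 * L * a * d) \<le> \<alpha> * (c / 2 * a\<^sup>2 + 2 * L\<^sup>2 / c * d\<^sup>2)"
    using assms by (intro mult_left_mono) auto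
  moreover have "\<alpha> * (c * a\<^sup>2) \<le> \<alpha> * p" using assms by (intro mult_left_mono) auto
  ultimately show ?thesis by (simp add: algebra_simps)
qed

lemma perturbed_gradient_step_bound:
  fixes f :: "'a::real_inner \<Rightarrow> real"
  assumes grad: "\<And>y. (f has_derivative (\<lambda>h. f' y \<bullet> h)) (at y)"
    and lip: "L-lipschitz_on UNIV f'" and "0 < L" and "0 < c"
    and strong: "\<And>y z. c * (norm (y - z))\<^sup>2 \<le> (y - z) \<bullet> (f' y - f' z)"
    and "f' xstar = 0" and "0 < \<alpha>" "\<alpha> * L \<le> 1/3"
  shows "(norm (A - xstar - \<alpha> *\<^sub>R f' V))\<^sup>2 \<le> (1 - \<alpha> * c / 2) * (norm (A - xstar))\<^sup>2
     + (2 * \<alpha> * L\<^sup>2 / c + 3 * \<alpha>\<^sup>2 * L\<^sup>2) * (norm (A - V))\<^sup>2"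
proof -
  have mono: "\<And>y z. 0 \<le> (y - z) \<bullet> (f' y - f' z)"
    using strong \<open>0 < c\<close> by (meson order_trans mult_nonneg_nonneg zero_le_power2 less_imp_le)
  define a where "a = A - xstar"
  define e where "e = f' V - f' A"
  define p where "p = a \<bullet> f' A"
  have pc: "c * (norm a)\<^sup>2 \<le> p"
    using strong[of A xstar] \<open>f' xstar = 0\<close> by (simp add: p_def a_def)
  have ne: "norm e \<le> L * norm (A - V)"
    using lipschitz_onD[OF lip, of V A] by (simp add: e_def dist_norm norm_minus_commute)
  have "a \<bullet> e \<ge> - (norm a * norm e)"
    using norm_cauchy_schwarz[of "-a" e] by simp
  moreover have "norm a * norm e \<le> L * norm a * norm (A - V)"
    using mult_left_mono[OF ne, of "norm a"] by (simp add: mult_ac)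
  ultimately have cross: "p - L * norm a * norm (A - V) \<le> a \<bullet> f' V"
    by (simp add: p_def e_def inner_diff_right)
  have "(norm (f' V))\<^sup>2 \<le> 3/2 * (norm (f' A))\<^sup>2 + 3 * (norm e)\<^sup>2"
    using norm_add_square_le[of "f' A" e] by (simp add: e_def)
  moreover have "(norm (f' A))\<^sup>2 \<le> 2 * L * p"
    using convex_lipschitz_gradient_cocoercive[OF grad lip \<open>0 < L\<close> mono, of A xstar]
      \<open>f' xstar = 0\<close> by (simp add: p_def a_def)
  moreover have "(norm e)\<^sup>2 \<le> (L * norm (A - V))\<^sup>2" using ne by (intro power_mono) auto
  ultimately have sq: "(norm (f' V))\<^sup>2 \<le> 3 * L * p + 3 * L\<^sup>2 * (norm (A - V))\<^sup>2"
    by (simp add: power_mult_distrib)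
  have "(norm (a - \<alpha> *\<^sub>R f' V))\<^sup>2 = (norm a)\<^sup>2 - 2 * \<alpha> * (a \<bullet> f' V) + \<alpha>\<^sup>2 * (norm (f' V))\<^sup>2"
    unfolding power2_norm_eq_inner
    by (simp add: inner_diff_left inner_diff_right inner_commute power2_eq_square algebra_simps)
  also have "\<dots> \<le> (norm a)\<^sup>2 - 2 * \<alpha> * (p - L * norm a * norm (A - V))
      + \<alpha>\<^sup>2 * (3 * L * p + 3 * L\<^sup>2 * (norm (A - V))\<^sup>2)"
    using cross sq \<open>0 < \<alpha>\<close> by (intro add_mono diff_mono mult_left_mono) auto
  also have "\<dots> \<le> (1 - \<alpha> * c / 2) * (norm a)\<^sup>2 + (2 * \<alpha> * L\<^sup>2 / c + 3 * \<alpha>\<^sup>2 * L\<^sup>2) * (norm (A - V))\<^sup>2"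
    by (rule perturbed_step_scalar_inequality) (use assms pc in auto)
  finally show ?thesis by (simp add: a_def)
qed

lemma integrable_and_integral_le_of_nn_integral_le:
  fixes h :: "'a \<Rightarrow> real"
  assumes "h \<in> borel_measurable M" "\<And>\<omega>. 0 \<le> h \<omega>"
    and "(\<integral>\<^sup>+ \<omega>. ennreal (h \<omega>) \<partial>M) \<le> ennreal c" "0 \<le> c"
  shows "integrable M h" "integral\<^sup>L M h \<le> c"
proof -
  show int: "integrable M h"
    using assms by (intro integrableI_nonneg) (auto intro: le_less_trans)
  have "ennreal (integral\<^sup>L M h) \<le> ennreal c"
    using assms nn_integral_eq_integral[OF int] by simp
  then show "integral\<^sup>L M h \<le> c" using \<open>0 \<le> c\<close> by simp
qed

lemma (in finite_measure) integrable_of_integrable_norm_square: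
  fixes X :: "'a \<Rightarrow> 'b::{banach, second_countable_topology}"
  assumes "X \<in> borel_measurable M" "integrable M (\<lambda>\<omega>. (norm (X \<omega>))\<^sup>2)"
  shows "integrable M X"
  using square_integrable_imp_integrable[of "\<lambda>\<omega>. norm (X \<omega>)"] assms
  by (simp add: integrable_norm_iff)

lemma integrable_norm_mult_of_integrable_norm_square:
  fixes X Y :: "'a \<Rightarrow> 'b::{real_normed_vector, second_countable_topology}"
  assumes [measurable]: "X \<in> borel_measurable M" "Y \<in> borel_measurable M"
    and "integrable M (\<lambda>\<omega>. (norm (X \<omega>))\<^sup>2)" "integrable M (\<lambda>\<omega>. (norm (Y \<omega>))\<^sup>2)"
  shows "integrable M (\<lambda>\<omega>. norm (X \<omega>) * norm (Y \<omega>))"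
proof (rule Bochner_Integration.integrable_bound)
  show "integrable M (\<lambda>\<omega>. (norm (X \<omega>))\<^sup>2 + (norm (Y \<omega>))\<^sup>2)"
    using assms by auto
  show "AE \<omega> in M. norm (norm (X \<omega>) * norm (Y \<omega>)) \<le> norm ((norm (X \<omega>))\<^sup>2 + (norm (Y \<omega>))\<^sup>2)"
  proof (rule AE_I2)
    fix \<omega>
    have "2 * (norm (X \<omega>) * norm (Y \<omega>)) \<le> (norm (X \<omega>))\<^sup>2 + (norm (Y \<omega>))\<^sup>2"
      using sum_squares_bound[of "norm (X \<omega>)" "norm (Y \<omega>)"] by (simp add: mult.assoc)
    moreover have "0 \<le> norm (X \<omega>) * norm (Y \<omega>)" by simp
    ultimately have "norm (X \<omega>) * norm (Y \<omega>) \<le> (norm (X \<omega>))\<^sup>2 + (norm (Y \<omega>))\<^sup>2"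
      by linarith
    then show "norm (norm (X \<omega>) * norm (Y \<omega>)) \<le> norm ((norm (X \<omega>))\<^sup>2 + (norm (Y \<omega>))\<^sup>2)"
      by simp
  qed
qed measurable

lemma (in sigma_finite_subalgebra) nn_integral_le_of_nn_cond_exp_le:
  assumes "prob_space M" "h \<in> borel_measurable M"
    and "AE \<omega> in M. nn_cond_exp M F h \<omega> \<le> ennreal c"
  shows "(\<integral>\<^sup>+ \<omega>. h \<omega> \<partial>M) \<le> ennreal c"
proof -
  have "(\<integral>\<^sup>+ \<omega>. h \<omega> \<partial>M) = (\<integral>\<^sup>+ \<omega>. nn_cond_exp M F h \<omega> \<partial>M)"
    using nn_cond_exp_intg[of "\<lambda>_. 1" h] assms(2) by simp
  also have "\<dots> \<le> (\<integral>\<^sup>+ \<omega>. ennreal c \<partial>M)"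
    using assms(3) by (rule nn_integral_mono_AE)
  also have "\<dots> = ennreal c"
    using prob_space.emeasure_space_1[OF \<open>prob_space M\<close>] by simp
  finally show ?thesis .
qed

lemma (in sigma_finite_subalgebra) real_cond_exp_inner_diff_eq_zero:
  fixes G g :: "'a \<Rightarrow> 'b::euclidean_space"
  assumes "integrable M G" "integrable M g" "g \<in> borel_measurable F"
    and "AE \<omega> in M. real_cond_exp M F (\<lambda>\<omega>. G \<omega> \<bullet> b) \<omega> = g \<omega> \<bullet> b"
  shows "AE \<omega> in M. real_cond_exp M F (\<lambda>\<omega>. (G \<omega> - g \<omega>) \<bullet> b) \<omega> = 0"
proof -
  have int: "integrable M (\<lambda>\<omega>. G \<omega> \<bullet> b)" "integrable M (\<lambda>\<omega>. g \<omega> \<bullet> b)"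
    using assms by auto
  have "(\<lambda>\<omega>. g \<omega> \<bullet> b) \<in> borel_measurable F" using assms(3) by measurable
  from real_cond_exp_diff[OF int] real_cond_exp_F_meas[OF int(2) this] assms(4)
  have "AE \<omega> in M. real_cond_exp M F (\<lambda>\<omega>. G \<omega> \<bullet> b - g \<omega> \<bullet> b) \<omega> = 0"
    by eventually_elim simp
  then show ?thesis by (simp add: inner_diff_left)
qed

lemma (in sigma_finite_subalgebra) integral_inner_eq_zero_of_cond_exp_eq_zero:
  fixes U N :: "'a \<Rightarrow> 'b::euclidean_space"
  assumes [measurable]: "U \<in> borel_measurable F" "N \<in> borel_measurable M"
    and sq: "integrable M (\<lambda>\<omega>. (norm (U \<omega>))\<^sup>2)" "integrable M (\<lambda>\<omega>. (norm (N \<omega>))\<^sup>2)"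
    and centred: "\<And>b. b \<in> Basis \<Longrightarrow> AE \<omega> in M. real_cond_exp M F (\<lambda>\<omega>. N \<omega> \<bullet> b) \<omega> = 0"
  shows "(\<integral> \<omega>. U \<omega> \<bullet> N \<omega> \<partial>M) = 0"
proof -
  have [measurable]: "U \<in> borel_measurable M" by (rule measurable_from_subalg[OF subalg]) simp
  have dom: "integrable M (\<lambda>\<omega>. norm (U \<omega>) * norm (N \<omega>))"
    by (rule integrable_norm_mult_of_integrable_norm_square) (use sq in auto)
  have int: "integrable M (\<lambda>\<omega>. (U \<omega> \<bullet> b) * (N \<omega> \<bullet> b))" if "b \<in> Basis" for b
  proof (rule Bochner_Integration.integrable_bound[OF dom])
    show "AE \<omega> in M. norm ((U \<omega> \<bullet> b) * (N \<omega> \<bullet> b)) \<le> norm (norm (U \<omega>) * norm (N \<omega>))"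
      using Basis_le_norm[OF that] by (auto simp: abs_mult intro!: mult_mono)
  qed measurable
  have component: "(\<integral> \<omega>. (U \<omega> \<bullet> b) * (N \<omega> \<bullet> b) \<partial>M) = 0" if "b \<in> Basis" for b
  proof -
    have "(\<integral> \<omega>. (U \<omega> \<bullet> b) * (N \<omega> \<bullet> b) \<partial>M)
        = (\<integral> \<omega>. (U \<omega> \<bullet> b) * real_cond_exp M F (\<lambda>\<omega>. N \<omega> \<bullet> b) \<omega> \<partial>M)"
      using real_cond_exp_intg(2)[OF int[OF that]] by simp
    also have "\<dots> = (\<integral> \<omega>. 0 \<partial>M)"
      by (rule integral_cong_AE) (use centred[OF that] in auto)
    finally show ?thesis by simp
  qed
  have "(\<integral> \<omega>. U \<omega> \<bullet> N \<omega> \<partial>M) = (\<integral> \<omega>. (\<Sum>b\<in>Basis. (U \<omega> \<bullet> b) * (N \<omega> \<bullet> b)) \<partial>M)"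
    by (intro arg_cong[where f="integral\<^sup>L M"] ext euclidean_inner)
  also have "\<dots> = (\<Sum>b\<in>Basis. (\<integral> \<omega>. (U \<omega> \<bullet> b) * (N \<omega> \<bullet> b) \<partial>M))"
    by (intro Bochner_Integration.integral_sum int)
  also have "\<dots> = 0" by (simp add: component)
  finally show ?thesis .
qed

lemma (in sigma_finite_subalgebra) nn_integral_norm_diff_square_orthogonal:
  fixes U N :: "'a \<Rightarrow> 'b::euclidean_space"
  assumes [measurable]: "U \<in> borel_measurable F" "N \<in> borel_measurable M"
    and sq: "integrable M (\<lambda>\<omega>. (norm (U \<omega>))\<^sup>2)" "integrable M (\<lambda>\<omega>. (norm (N \<omega>))\<^sup>2)"
    and centred: "\<And>b. b \<in> Basis \<Longrightarrow> AE \<omega> in M. real_cond_exp M F (\<lambda>\<omega>. N \<omega> \<bullet> b) \<omega> = 0"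
  shows "(\<integral>\<^sup>+ \<omega>. ennreal ((norm (U \<omega> - \<alpha> *\<^sub>R N \<omega>))\<^sup>2) \<partial>M)
       = ennreal ((\<integral> \<omega>. (norm (U \<omega>))\<^sup>2 \<partial>M) + \<alpha>\<^sup>2 * (\<integral> \<omega>. (norm (N \<omega>))\<^sup>2 \<partial>M))"
proof -
  have [measurable]: "U \<in> borel_measurable M" by (rule measurable_from_subalg[OF subalg]) simp
  have expand: "(norm (U \<omega> - \<alpha> *\<^sub>R N \<omega>))\<^sup>2
      = (norm (U \<omega>))\<^sup>2 - 2 * \<alpha> * (U \<omega> \<bullet> N \<omega>) + \<alpha>\<^sup>2 * (norm (N \<omega>))\<^sup>2" for \<omega>
    unfolding power2_norm_eq_inner
    by (simp add: inner_diff_left inner_diff_right inner_commute power2_eq_square algebra_simps)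
  have "integrable M (\<lambda>\<omega>. U \<omega> \<bullet> N \<omega>)"
  proof (rule Bochner_Integration.integrable_bound)
    show "integrable M (\<lambda>\<omega>. norm (U \<omega>) * norm (N \<omega>))"
      by (rule integrable_norm_mult_of_integrable_norm_square) (use sq in auto)
    show "AE \<omega> in M. norm (U \<omega> \<bullet> N \<omega>) \<le> norm (norm (U \<omega>) * norm (N \<omega>))"
      using Cauchy_Schwarz_ineq2 by auto
  qed measurable
  then have "integrable M (\<lambda>\<omega>. (norm (U \<omega> - \<alpha> *\<^sub>R N \<omega>))\<^sup>2)"
    unfolding expand using sq by auto
  moreover have "(\<integral> \<omega>. (norm (U \<omega> - \<alpha> *\<^sub>R N \<omega>))\<^sup>2 \<partial>M)
      = (\<integral> \<omega>. (norm (U \<omega>))\<^sup>2 \<partial>M) + \<alpha>\<^sup>2 * (\<integral> \<omega>. (norm (N \<omega>))\<^sup>2 \<partial>M)"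
    unfolding expand
    using sq \<open>integrable M (\<lambda>\<omega>. U \<omega> \<bullet> N \<omega>)\<close>
      integral_inner_eq_zero_of_cond_exp_eq_zero[OF assms]
    by simp
  ultimately show ?thesis
    by (simp add: nn_integral_eq_integral)
qed

lemma (in sigma_finite_subalgebra) stochastic_gradient_step_expectation:
  fixes X V G :: "'a \<Rightarrow> 'b::euclidean_space" and g :: "'b \<Rightarrow> 'b"
  assumes "prob_space M" and [measurable]: "g \<in> borel_measurable borel"
    "X \<in> borel_measurable F" "V \<in> borel_measurable F" "G \<in> borel_measurable M"
    and "integrable M G"
    and unbiased: "\<And>b. b \<in> Basis \<Longrightarrow>
        AE \<omega> in M. real_cond_exp M F (\<lambda>\<omega>. G \<omega> \<bullet> b) \<omega> = g (V \<omega>) \<bullet> b"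
    and variance: "AE \<omega> in M.
        nn_cond_exp M F (\<lambda>\<omega>. ennreal ((norm (G \<omega> - g (V \<omega>)))\<^sup>2)) \<omega> \<le> ennreal (\<sigma>\<^sup>2)"
    and consistent: "(\<integral>\<^sup>+ \<omega>. ennreal ((norm (X \<omega> - V \<omega>))\<^sup>2) \<partial>M) \<le> ennreal \<delta>" "0 \<le> \<delta>"
    and sq: "integrable M (\<lambda>\<omega>. (norm (X \<omega> - xstar))\<^sup>2)"
    and step: "\<And>y w. (norm (y - xstar - \<alpha> *\<^sub>R g w))\<^sup>2
        \<le> q * (norm (y - xstar))\<^sup>2 + K * (norm (y - w))\<^sup>2"
    and "0 \<le> K" "0 < \<alpha>"
  shows "(\<integral>\<^sup>+ \<omega>. ennreal ((norm (X \<omega> - \<alpha> *\<^sub>R G \<omega> - xstar))\<^sup>2) \<partial>M)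
    \<le> ennreal (q * (\<integral> \<omega>. (norm (X \<omega> - xstar))\<^sup>2 \<partial>M) + K * \<delta> + \<alpha>\<^sup>2 * \<sigma>\<^sup>2)"
proof -
  interpret prob_space M by fact
  have [measurable]: "X \<in> borel_measurable M" "V \<in> borel_measurable M"
    by (auto intro: measurable_from_subalg[OF subalg])
  define U where "U \<omega> = X \<omega> - xstar - \<alpha> *\<^sub>R g (V \<omega>)" for \<omega>
  define N where "N \<omega> = G \<omega> - g (V \<omega>)" for \<omega>
  have [measurable]: "U \<in> borel_measurable F" "U \<in> borel_measurable M" "N \<in> borel_measurable M"
    unfolding U_def N_def by measurable
  have "(\<lambda>\<omega>. (norm (X \<omega> - V \<omega>))\<^sup>2) \<in> borel_measurable M" by measurable
  note XV = integrable_and_integral_le_of_nn_integral_le[OF this zero_le_power2 consistent]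
  have "(\<integral>\<^sup>+ \<omega>. ennreal ((norm (N \<omega>))\<^sup>2) \<partial>M) \<le> ennreal (\<sigma>\<^sup>2)"
    using nn_integral_le_of_nn_cond_exp_le[OF \<open>prob_space M\<close> _ variance] by (simp add: N_def)
  note N = integrable_and_integral_le_of_nn_integral_le[OF _ zero_le_power2 this zero_le_power2]
  have sq_XV: "integrable M (\<lambda>\<omega>. (norm (X \<omega> - V \<omega>))\<^sup>2)"
    and E_XV: "(\<integral> \<omega>. (norm (X \<omega> - V \<omega>))\<^sup>2 \<partial>M) \<le> \<delta>"
    and sq_N: "integrable M (\<lambda>\<omega>. (norm (N \<omega>))\<^sup>2)"
    and E_N: "(\<integral> \<omega>. (norm (N \<omega>))\<^sup>2 \<partial>M) \<le> \<sigma>\<^sup>2"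
    using XV N by auto
  have U_le: "(norm (U \<omega>))\<^sup>2 \<le> q * (norm (X \<omega> - xstar))\<^sup>2 + K * (norm (X \<omega> - V \<omega>))\<^sup>2" for \<omega>
    unfolding U_def by (rule step)
  have sq_U: "integrable M (\<lambda>\<omega>. (norm (U \<omega>))\<^sup>2)"
  proof (rule Bochner_Integration.integrable_bound)
    show "integrable M (\<lambda>\<omega>. q * (norm (X \<omega> - xstar))\<^sup>2 + K * (norm (X \<omega> - V \<omega>))\<^sup>2)"
      using sq sq_XV by auto
    show "AE \<omega> in M. norm ((norm (U \<omega>))\<^sup>2)
        \<le> norm (q * (norm (X \<omega> - xstar))\<^sup>2 + K * (norm (X \<omega> - V \<omega>))\<^sup>2)"
      by (intro AE_I2) (simp add: order_trans[OF U_le abs_ge_self])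
  qed measurable
  have "integrable M (\<lambda>\<omega>. X \<omega> - xstar)" "integrable M U"
    by (rule integrable_of_integrable_norm_square, measurable, fact)+
  then have "integrable M (\<lambda>\<omega>. (1 / \<alpha>) *\<^sub>R ((X \<omega> - xstar) - U \<omega>))"
    by (intro integrable_scaleR_right) (rule Bochner_Integration.integrable_diff)
  then have "integrable M (\<lambda>\<omega>. g (V \<omega>))"
    using \<open>0 < \<alpha>\<close> by (simp add: U_def)
  then have centred: "AE \<omega> in M. real_cond_exp M F (\<lambda>\<omega>. N \<omega> \<bullet> b) \<omega> = 0" if "b \<in> Basis" for b
    unfolding N_def
    by (rule real_cond_exp_inner_diff_eq_zero[OF \<open>integrable M G\<close>]) (auto intro: unbiased[OF that])
  have "(\<integral>\<^sup>+ \<omega>. ennreal ((norm (X \<omega> - \<alpha> *\<^sub>R G \<omega> - xstar))\<^sup>2) \<partial>M)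
      = (\<integral>\<^sup>+ \<omega>. ennreal ((norm (U \<omega> - \<alpha> *\<^sub>R N \<omega>))\<^sup>2) \<partial>M)"
    by (intro nn_integral_cong) (simp add: U_def N_def algebra_simps)
  also have "\<dots> = ennreal ((\<integral> \<omega>. (norm (U \<omega>))\<^sup>2 \<partial>M) + \<alpha>\<^sup>2 * (\<integral> \<omega>. (norm (N \<omega>))\<^sup>2 \<partial>M))"
    by (rule nn_integral_norm_diff_square_orthogonal) (use sq_U sq_N centred in auto)
  also have "\<dots> \<le> ennreal (q * (\<integral> \<omega>. (norm (X \<omega> - xstar))\<^sup>2 \<partial>M) + K * \<delta> + \<alpha>\<^sup>2 * \<sigma>\<^sup>2)"
  proof (rule ennreal_leI)
    have "(\<integral> \<omega>. (norm (U \<omega>))\<^sup>2 \<partial>M)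
        \<le> (\<integral> \<omega>. q * (norm (X \<omega> - xstar))\<^sup>2 + K * (norm (X \<omega> - V \<omega>))\<^sup>2 \<partial>M)"
      using sq sq_XV sq_U U_le by (intro integral_mono) auto
    also have "\<dots> \<le> q * (\<integral> \<omega>. (norm (X \<omega> - xstar))\<^sup>2 \<partial>M) + K * \<delta>"
      using sq sq_XV E_XV \<open>0 \<le> K\<close> by (simp add: mult_left_mono)
    finally show "(\<integral> \<omega>. (norm (U \<omega>))\<^sup>2 \<partial>M) + \<alpha>\<^sup>2 * (\<integral> \<omega>. (norm (N \<omega>))\<^sup>2 \<partial>M)
        \<le> q * (\<integral> \<omega>. (norm (X \<omega> - xstar))\<^sup>2 \<partial>M) + K * \<delta> + \<alpha>\<^sup>2 * \<sigma>\<^sup>2"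
      using mult_left_mono[OF E_N zero_le_power2[of \<alpha>]] by linarith
  qed
  finally show ?thesis .
qed

lemma (in sigma_finite_subalgebra) stochastic_gradient_step_nn_integral:
  fixes X V G :: "'a \<Rightarrow> 'b::euclidean_space" and g :: "'b \<Rightarrow> 'b"
  assumes "prob_space M" and [measurable]: "g \<in> borel_measurable borel"
    "X \<in> borel_measurable F" "V \<in> borel_measurable F" "G \<in> borel_measurable M"
    and "integrable M G"
    and unbiased: "\<And>b. b \<in> Basis \<Longrightarrow>
        AE \<omega> in M. real_cond_exp M F (\<lambda>\<omega>. G \<omega> \<bullet> b) \<omega> = g (V \<omega>) \<bullet> b"
    and variance: "AE \<omega> in M.
        nn_cond_exp M F (\<lambda>\<omega>. ennreal ((norm (G \<omega> - g (V \<omega>)))\<^sup>2)) \<omega> \<le> ennreal (\<sigma>\<^sup>2)"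
    and consistent: "(\<integral>\<^sup>+ \<omega>. ennreal ((norm (X \<omega> - V \<omega>))\<^sup>2) \<partial>M) \<le> ennreal \<delta>" "0 \<le> \<delta>"
    and step: "\<And>y w. (norm (y - xstar - \<alpha> *\<^sub>R g w))\<^sup>2
        \<le> q * (norm (y - xstar))\<^sup>2 + K * (norm (y - w))\<^sup>2"
    and "0 < q" "0 \<le> K" "0 < \<alpha>"
  shows "(\<integral>\<^sup>+ \<omega>. ennreal ((norm (X \<omega> - \<alpha> *\<^sub>R G \<omega> - xstar))\<^sup>2) \<partial>M)
    \<le> ennreal q * (\<integral>\<^sup>+ \<omega>. ennreal ((norm (X \<omega> - xstar))\<^sup>2) \<partial>M) + ennreal (K * \<delta> + \<alpha>\<^sup>2 * \<sigma>\<^sup>2)"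
proof (cases "integrable M (\<lambda>\<omega>. (norm (X \<omega> - xstar))\<^sup>2)")
  case True
  have "0 \<le> K * \<delta> + \<alpha>\<^sup>2 * \<sigma>\<^sup>2" using \<open>0 \<le> K\<close> \<open>0 \<le> \<delta>\<close> by simp
  moreover have "0 \<le> (\<integral> \<omega>. (norm (X \<omega> - xstar))\<^sup>2 \<partial>M)" by simp
  ultimately have "ennreal (q * (\<integral> \<omega>. (norm (X \<omega> - xstar))\<^sup>2 \<partial>M) + K * \<delta> + \<alpha>\<^sup>2 * \<sigma>\<^sup>2)
      = ennreal q * (\<integral>\<^sup>+ \<omega>. ennreal ((norm (X \<omega> - xstar))\<^sup>2) \<partial>M) + ennreal (K * \<delta> + \<alpha>\<^sup>2 * \<sigma>\<^sup>2)"
    using \<open>0 < q\<close> by (simp add: nn_integral_eq_integral[OF True] ennreal_plus ennreal_mult add.assoc)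
  with stochastic_gradient_step_expectation[OF assms(1-10) True step assms(13-14)]
  show ?thesis by simp
next
  case False
  have [measurable]: "X \<in> borel_measurable M" by (rule measurable_from_subalg[OF subalg]) simp
  have "(\<integral>\<^sup>+ \<omega>. ennreal ((norm (X \<omega> - xstar))\<^sup>2) \<partial>M) = \<infinity>"
  proof (rule ccontr)
    assume "(\<integral>\<^sup>+ \<omega>. ennreal ((norm (X \<omega> - xstar))\<^sup>2) \<partial>M) \<noteq> \<infinity>"
    then have "integrable M (\<lambda>\<omega>. (norm (X \<omega> - xstar))\<^sup>2)"
      by (intro integrableI_nonneg) (measurable, simp_all add: less_top)
    with False show False ..
  qed
  then show ?thesis using \<open>0 < q\<close> by (simp add: ennreal_mult_top)
qed

theorem mainTheorem6:
  fixes M :: "'a measure" and F :: "nat \<Rightarrow> 'a measure"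
    and f :: "real^'n \<Rightarrow> real" and f' :: "real^'n \<Rightarrow> real^'n"
    and L c \<alpha> B \<sigma> :: real and xstar x0 :: "real^'n"
    and x v G :: "nat \<Rightarrow> 'a \<Rightarrow> real^'n" and t :: nat
  assumes prob: "prob_space M"
    and filt_sub: "\<And>s. sigma_finite_subalgebra M (F s)"
    and filt_mono: "\<And>s. sets (F s) \<subseteq> sets (F (Suc s))"
    and grad: "\<And>y. (f has_derivative (\<lambda>h. f' y \<bullet> h)) (at y)"
    and lip: "L-lipschitz_on UNIV f'"
    and c_pos: "c > 0"
    and strong: "\<And>y z. (y - z) \<bullet> (f' y - f' z) \<ge> c * (norm (y - z))\<^sup>2"
    and minimizer: "\<And>y. f xstar \<le> f y"
    and alpha_pos: "\<alpha> > 0" and alpha_le: "\<alpha> \<le> 1 / (3 * L)"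
    and B_pos: "B > 0"
    and x0: "x 0 = (\<lambda>_. x0)"
    and x_meas: "\<And>s. x s \<in> borel_measurable (F s)"
    and v_meas: "\<And>s. v s \<in> borel_measurable (F s)"
    and G_meas: "\<And>s. G s \<in> borel_measurable (F (Suc s))"
    and G_int: "\<And>s. integrable M (G s)"
    and unbiased: "\<And>s b. b \<in> Basis \<Longrightarrow>
        AE \<omega> in M. real_cond_exp M (F s) (\<lambda>\<omega>. G s \<omega> \<bullet> b) \<omega> = f' (v s \<omega>) \<bullet> b"
    and variance: "\<And>s. AE \<omega> in M.
        nn_cond_exp M (F s) (\<lambda>\<omega>. ennreal ((norm (G s \<omega> - f' (v s \<omega>)))\<^sup>2)) \<omega> \<le> ennreal (\<sigma>\<^sup>2)"
    and update: "\<And>s \<omega>. \<omega> \<in> space M \<Longrightarrow> x (Suc s) \<omega> = x s \<omega> - \<alpha> *\<^sub>R G s \<omega>"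
    and elastic: "\<And>s. (\<integral>\<^sup>+ \<omega>. ennreal ((norm (x s \<omega> - v s \<omega>))\<^sup>2) \<partial>M) \<le> ennreal (\<alpha>\<^sup>2 * B\<^sup>2)"
  shows "(\<integral>\<^sup>+ \<omega>. ennreal ((norm (x (Suc t) \<omega> - xstar))\<^sup>2) \<partial>M)
     \<le> ennreal (1 - \<alpha> * c / 2) * (\<integral>\<^sup>+ \<omega>. ennreal ((norm (x t \<omega> - xstar))\<^sup>2) \<partial>M)
       + ennreal (2 * \<alpha>^3 * B\<^sup>2 * L\<^sup>2 / c + 3 * \<alpha>\<^sup>2 * \<sigma>\<^sup>2 + 3 * \<alpha>^4 * L\<^sup>2 * B\<^sup>2)"
proof -
  have "0 < L"
    using alpha_pos alpha_le by (metis divide_nonneg_nonpos linorder_not_less mult_nonneg_nonpos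
        order_less_le_trans zero_le_one zero_le_numeral)
  then have aL: "\<alpha> * L \<le> 1/3" using alpha_le by (simp add: field_simps)
  have "\<alpha> * c \<le> \<alpha> * L"
    using strongly_monotone_le_lipschitz[OF lip strong] alpha_pos by (simp add: mult_left_mono)
  with aL have q_pos: "0 < 1 - \<alpha> * c / 2" by linarith
  have K_nonneg: "0 \<le> 2 * \<alpha> * L\<^sup>2 / c + 3 * \<alpha>\<^sup>2 * L\<^sup>2"
    using c_pos alpha_pos by (intro add_nonneg_nonneg divide_nonneg_pos mult_nonneg_nonneg) auto
  have "f' xstar = 0" using grad minimizer by (rule gradient_eq_zero_at_minimizer[where f'=f'])
  have f'_meas: "f' \<in> borel_measurable borel"
    by (intro borel_measurable_continuous_onI lipschitz_on_continuous_on[OF lip])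
  have G_meas_M: "G t \<in> borel_measurable M"
    using measurable_from_subalg[OF sigma_finite_subalgebra.subalg[OF filt_sub] G_meas] .
  have "(\<integral>\<^sup>+ \<omega>. ennreal ((norm (x (Suc t) \<omega> - xstar))\<^sup>2) \<partial>M)
      = (\<integral>\<^sup>+ \<omega>. ennreal ((norm (x t \<omega> - \<alpha> *\<^sub>R G t \<omega> - xstar))\<^sup>2) \<partial>M)"
    by (rule nn_integral_cong) (simp add: update)
  also have "\<dots> \<le> ennreal (1 - \<alpha> * c / 2) * (\<integral>\<^sup>+ \<omega>. ennreal ((norm (x t \<omega> - xstar))\<^sup>2) \<partial>M)
      + ennreal ((2 * \<alpha> * L\<^sup>2 / c + 3 * \<alpha>\<^sup>2 * L\<^sup>2) * (\<alpha>\<^sup>2 * B\<^sup>2) + \<alpha>\<^sup>2 * \<sigma>\<^sup>2)"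
    by (rule sigma_finite_subalgebra.stochastic_gradient_step_nn_integral[OF filt_sub prob f'_meas
          x_meas v_meas G_meas_M G_int unbiased[where s=t] variance elastic[of t]
          mult_nonneg_nonneg[OF zero_le_power2 zero_le_power2] perturbed_gradient_step_bound[OF grad
          lip \<open>0 < L\<close> c_pos strong \<open>f' xstar = 0\<close> alpha_pos aL] q_pos K_nonneg alpha_pos])
  also have "(2 * \<alpha> * L\<^sup>2 / c + 3 * \<alpha>\<^sup>2 * L\<^sup>2) * (\<alpha>\<^sup>2 * B\<^sup>2) + \<alpha>\<^sup>2 * \<sigma>\<^sup>2
      \<le> 2 * \<alpha>^3 * B\<^sup>2 * L\<^sup>2 / c + 3 * \<alpha>\<^sup>2 * \<sigma>\<^sup>2 + 3 * \<alpha>^4 * L\<^sup>2 * B\<^sup>2"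
  proof -
    have "(2 * \<alpha> * L\<^sup>2 / c + 3 * \<alpha>\<^sup>2 * L\<^sup>2) * (\<alpha>\<^sup>2 * B\<^sup>2)
        = 2 * \<alpha>^3 * B\<^sup>2 * L\<^sup>2 / c + 3 * \<alpha>^4 * L\<^sup>2 * B\<^sup>2"
      using c_pos by (simp add: field_simps power2_eq_square power3_eq_cube power4_eq_xxxx)
    \<comment> \<open>the stated noise term is three times what the argument yields\<close>
    moreover have "\<alpha>\<^sup>2 * \<sigma>\<^sup>2 \<le> 3 * \<alpha>\<^sup>2 * \<sigma>\<^sup>2" by simp
    ultimately show ?thesis by linarith
  qed
  finally show ?thesis by (simp add: add_left_mono ennreal_leI)
qed

end
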